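(* The LCM matrix of any GCD closed set of positive integers with at most $7$ elements is invertible. Moreover, if $S$ is a GCD closed set with $8$ elements and $[S]$ is not invertible, then $(S,\mid)$ is isomorphic to the cube semilattice, i.e. the Boolean lattice of all subsets of a $3$-element set ordered by inclusion.
   Context: $S$ is GCD closed if $\gcd(x,y)\in S$ for all $x,y\in S$. The LCM matrix $[S]$ of $S=\{x_1,\dots,x_n\}$ has $(i,j)$ entry $\mathrm{lcm}(x_i,x_j)$. *)

theory Defs
  imports "Jordan_Normal_Form.Matrix"
begin

definition gcd_closed :: "nat set \<Rightarrow> bool" where
  "gcd_closed S \<longleftrightarrow> (\<forall>x\<in>S. \<forall>y\<in>S. gcd x y \<in> S)"

text \<open>LCM matrix of S = {x_1,...,x_n}, listing the elements in increasing order
  (invertibility does not depend on the ordering), with real entries.\<close>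
definition lcm_matrix :: "nat set \<Rightarrow> real mat" where
  "lcm_matrix S = (let xs = sorted_list_of_set S in
     mat (length xs) (length xs) (\<lambda>(i,j). real (lcm (xs ! i) (xs ! j))))"

end

theory Submission
  imports Defs "Jordan_Normal_Form.Determinant"
begin

(*
  Let g = recip_mobius, so that g summed over the divisors of n is 1/n. Writing
  lcm x y = x * y * (1 / gcd x y) and expanding 1 / gcd x y over the divisors of gcd x y factors the
  LCM matrix of a GCD-closed set S, sorted increasingly, as F * E^T with lower triangular
  divisibility matrices E and F; the diagonal of F carries the weights psi S x, the sum of g over
  the divisors of x that divide no proper divisor of x in S. So [S] is invertible unless some
  psi S x vanishes.

  Moreover psi S x = avoid_sum x Y for the antichain Y of maximal proper divisors of x in S, and
  avoid_sum is an inclusion-exclusion sum. It is positive for |Y| = 2 because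
  1/a + 1/b < 1/gcd a b for incomparable a, b, and it strictly decreases when an element of Y is
  removed whose gcds with the other elements of Y have a greatest element. An antichain admitting no
  such removal either has at least 8 elements of S dividing its elements, or is a triple a, b, c
  with pairwise incomparable pairwise gcds; then a, b, c, their gcds and x are 8 distinct elements
  of S forming a cube.
*)

section \<open>Sums of the Moebius inverse of 1/n over divisors\<close>

function recip_mobius :: "nat \<Rightarrow> real" where
  "recip_mobius n = 1 / real n - (\<Sum>d\<in>{d. d dvd n \<and> d < n}. recip_mobius d)"
  by auto
termination by (relation "measure id") auto

declare recip_mobius.simps [simp del]

lemma sum_divisors_recip_mobius:
  assumes "n > 0"
  shows "(\<Sum>d\<in>{d. d dvd n}. recip_mobius d) = 1 / real n"
proof -
  have "{d. d dvd n} = insert n {d. d dvd n \<and> d < n}"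
    using assms by (auto dest: dvd_imp_le)
  then show ?thesis
    by (simp add: recip_mobius.simps [of n])
qed

definition avoid_sum :: "nat \<Rightarrow> nat set \<Rightarrow> real" where
  "avoid_sum x Y = (\<Sum>d\<in>{d. d dvd x \<and> (\<forall>y\<in>Y. \<not> d dvd y)}. recip_mobius d)"

lemma avoid_sum_empty: "x > 0 \<Longrightarrow> avoid_sum x {} = 1 / real x"
  by (simp add: avoid_sum_def sum_divisors_recip_mobius)

lemma avoid_sum_cong:
  assumes "\<And>d. d dvd x \<Longrightarrow> (\<exists>y\<in>Y. d dvd y) \<longleftrightarrow> (\<exists>y\<in>Y'. d dvd y)"
  shows "avoid_sum x Y = avoid_sum x Y'"
  unfolding avoid_sum_def using assms by (intro sum.cong) auto

lemma avoid_sum_cofinal: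
  assumes "Y \<subseteq> P" and "\<And>p. p \<in> P \<Longrightarrow> \<exists>y\<in>Y. p dvd y"
  shows "avoid_sum x P = avoid_sum x Y"
  using assms by (intro avoid_sum_cong) (meson dvd_trans subsetD)

lemma avoid_sum_insert:
  assumes "x > 0" and "y dvd x"
  shows "avoid_sum x (insert y Y) = avoid_sum x Y - avoid_sum y (gcd y ` Y)"
proof -
  have "y > 0"
    using assms by (auto intro: Nat.gr0I)
  let ?A = "{d. d dvd x \<and> (\<forall>z\<in>Y. \<not> d dvd z)}"
  let ?A1 = "{d. d dvd x \<and> (\<forall>z\<in>insert y Y. \<not> d dvd z)}"
  let ?A2 = "{d. d dvd y \<and> (\<forall>z\<in>gcd y ` Y. \<not> d dvd z)}"
  have "?A = ?A1 \<union> ?A2" and "?A1 \<inter> ?A2 = {}"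
    using \<open>y dvd x\<close> by (auto intro: dvd_trans)
  moreover have "finite ?A1" "finite ?A2"
    using \<open>x > 0\<close> \<open>y > 0\<close> by auto
  ultimately have "avoid_sum x Y = avoid_sum x (insert y Y) + avoid_sum y (gcd y ` Y)"
    unfolding avoid_sum_def by (simp add: sum.union_disjoint)
  then show ?thesis
    by simp
qed

lemma avoid_sum_singleton:
  assumes "x > 0" and "y dvd x"
  shows "avoid_sum x {y} = 1 / real x - 1 / real y"
proof -
  have "y > 0"
    using assms by (auto intro: Nat.gr0I)
  then show ?thesis
    using avoid_sum_insert [OF assms, of "{}"] by (simp add: avoid_sum_empty assms)
qed

definition dvd_incomparable :: "nat \<Rightarrow> nat \<Rightarrow> bool" where
  "dvd_incomparable a b \<longleftrightarrow> \<not> a dvd b \<and> \<not> b dvd a"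

lemma add_less_mult_distinct:
  fixes p q :: nat
  assumes "2 \<le> p" "2 \<le> q" "p \<noteq> q"
  shows "p + q < p * q"
proof (cases "p < q")
  case True
  then have "p + q < 2 * q"
    by simp
  also have "\<dots> \<le> p * q"
    using assms(1) by (rule mult_le_mono1)
  finally show ?thesis .
next
  case False
  then have "p + q < p * 2"
    using assms(3) by simp
  also have "\<dots> \<le> p * q"
    using assms(2) by (rule mult_le_mono2)
  finally show ?thesis .
qed

lemma recip_add_recip_less_recip_gcd:
  assumes "a > 0" "b > 0" "dvd_incomparable a b"
  shows "1 / real a + 1 / real b < 1 / real (gcd a b)"
proof -
  define g where "g = gcd a b"
  obtain p q where p: "a = g * p" and q: "b = g * q"
    unfolding g_def by (meson gcd_dvd1 gcd_dvd2 dvdE)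
  have "g > 0"
    using \<open>a > 0\<close> by (simp add: g_def)
  have "p \<noteq> 0" "q \<noteq> 0"
    using p q assms(1,2) by (metis mult_0_right less_irrefl)+
  moreover have "p \<noteq> 1" "q \<noteq> 1" "p \<noteq> q"
    using p q assms(3) unfolding dvd_incomparable_def g_def by auto
  ultimately have "p + q < p * q"
    by (intro add_less_mult_distinct) auto
  then have "real p + real q < real p * real q"
    by (metis of_nat_add of_nat_less_iff of_nat_mult)
  then have "real g * (real p + real q) < real g * (real p * real q)"
    using \<open>g > 0\<close> by simp
  moreover have "real a = real g * real p" "real b = real g * real q"
    using p q by simp_all
  ultimately show ?thesis
    using \<open>g > 0\<close> \<open>p \<noteq> 0\<close> \<open>q \<noteq> 0\<close> by (simp add: g_def [symmetric] field_simps)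
qed

lemma avoid_sum_pair_pos:
  assumes "x > 0" "a dvd x" "b dvd x" "dvd_incomparable a b"
  shows "avoid_sum x {a, b} > 0"
proof -
  have "a > 0" "b > 0"
    using assms by (auto intro: Nat.gr0I)
  have "avoid_sum x {a, b} = 1 / real x - (1 / real a + 1 / real b - 1 / real (gcd a b))"
    using avoid_sum_insert [OF assms(1,2), of "{b}"] avoid_sum_singleton [OF assms(1,3)]
      avoid_sum_singleton [OF \<open>a > 0\<close>, of "gcd a b"] by simp
  moreover have "1 / real x > 0"
    using \<open>x > 0\<close> by simp
  ultimately show ?thesis
    using recip_add_recip_less_recip_gcd [OF \<open>a > 0\<close> \<open>b > 0\<close> assms(4)] by linarith
qed

section \<open>Factorisation of the LCM matrix\<close>

definition proper_divisors_in :: "nat set \<Rightarrow> nat \<Rightarrow> nat set" where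
  "proper_divisors_in S x = {y\<in>S. y dvd x \<and> y \<noteq> x}"

definition psi :: "nat set \<Rightarrow> nat \<Rightarrow> real" where
  "psi S x = avoid_sum x (proper_divisors_in S x)"

definition fresh_divisors :: "nat set \<Rightarrow> nat \<Rightarrow> nat set" where
  "fresh_divisors S w = {d. d dvd w \<and> (\<forall>y\<in>S. y dvd w \<and> y \<noteq> w \<longrightarrow> \<not> d dvd y)}"

lemma psi_eq_sum_fresh_divisors: "psi S w = (\<Sum>d\<in>fresh_divisors S w. recip_mobius d)"
  unfolding psi_def avoid_sum_def fresh_divisors_def proper_divisors_in_def by (rule sum.cong) auto

lemma fresh_divisors_disjoint:
  assumes "gcd_closed S" "v \<in> S" "w \<in> S" "v \<noteq> w"
  shows "fresh_divisors S v \<inter> fresh_divisors S w = {}"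
proof (intro equals0I)
  fix d
  assume d: "d \<in> fresh_divisors S v \<inter> fresh_divisors S w"
  have "gcd v w \<in> S"
    using assms unfolding gcd_closed_def by blast
  moreover have "d dvd gcd v w"
    using d unfolding fresh_divisors_def by simp
  moreover have "\<forall>y\<in>S. y dvd v \<and> y \<noteq> v \<longrightarrow> \<not> d dvd y" "\<forall>y\<in>S. y dvd w \<and> y \<noteq> w \<longrightarrow> \<not> d dvd y"
    using d by (simp_all add: fresh_divisors_def)
  ultimately have "gcd v w = v" "gcd v w = w"
    by (meson gcd_dvd1 gcd_dvd2)+
  with \<open>v \<noteq> w\<close> show False
    by simp
qed

lemma divisors_eq_UN_fresh_divisors:
  assumes "finite S" "0 \<notin> S" "a \<in> S"
  shows "{d. d dvd a} = (\<Union>w\<in>{w\<in>S. w dvd a}. fresh_divisors S w)"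
proof
  show "(\<Union>w\<in>{w\<in>S. w dvd a}. fresh_divisors S w) \<subseteq> {d. d dvd a}"
    unfolding fresh_divisors_def by (auto intro: dvd_trans)
next
  show "{d. d dvd a} \<subseteq> (\<Union>w\<in>{w\<in>S. w dvd a}. fresh_divisors S w)"
  proof
    fix d
    assume "d \<in> {d. d dvd a}"
    define Q where "Q = {s\<in>S. d dvd s \<and> s dvd a}"
    have "a \<in> Q" "finite Q"
      using assms \<open>d \<in> {d. d dvd a}\<close> by (auto simp: Q_def)
    define m where "m = Min Q"
    have m: "m \<in> Q"
      unfolding m_def using \<open>a \<in> Q\<close> \<open>finite Q\<close> by (intro Min_in) auto
    have "d \<in> fresh_divisors S m"
    proof -
      have "y = m" if "y \<in> S" "y dvd m" "d dvd y" for y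
      proof (rule antisym)
        show "y \<le> m"
          using that m assms(2) by (auto simp: Q_def intro: dvd_imp_le Nat.gr0I)
        show "m \<le> y"
          using that m \<open>finite Q\<close> by (auto simp: m_def Q_def intro: Min_le dvd_trans)
      qed
      then show ?thesis
        using m by (auto simp: fresh_divisors_def Q_def)
    qed
    with m show "d \<in> (\<Union>w\<in>{w\<in>S. w dvd a}. fresh_divisors S w)"
      by (auto simp: Q_def)
  qed
qed

lemma sum_psi_divisors:
  assumes "finite S" "gcd_closed S" "0 \<notin> S" "a \<in> S"
  shows "(\<Sum>w\<in>{w\<in>S. w dvd a}. psi S w) = 1 / real a"
proof -
  have "a > 0"
    using assms(3,4) by (auto intro: Nat.gr0I)
  have "finite (fresh_divisors S w)" if "w \<in> S" for w
  proof -
    have "w > 0"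
      using that assms(3) by (auto intro: Nat.gr0I)
    then show ?thesis
      by (rule finite_subset [OF _ finite_divisors_nat, rotated]) (auto simp: fresh_divisors_def)
  qed
  then have "(\<Sum>d\<in>{d. d dvd a}. recip_mobius d) = (\<Sum>w\<in>{w\<in>S. w dvd a}. psi S w)"
    unfolding divisors_eq_UN_fresh_divisors [OF assms(1,3,4)] psi_eq_sum_fresh_divisors
    using assms(1) fresh_divisors_disjoint [OF assms(2)] by (intro sum.UNION_disjoint) auto
  then show ?thesis
    using sum_divisors_recip_mobius [OF \<open>a > 0\<close>] by simp
qed

lemma lcm_eq_sum_psi:
  assumes "finite S" "gcd_closed S" "0 \<notin> S" "a \<in> S" "b \<in> S"
  shows "real (lcm a b) = real a * real b * (\<Sum>w\<in>{w\<in>S. w dvd a \<and> w dvd b}. psi S w)"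
proof -
  have "gcd a b \<in> S"
    using assms unfolding gcd_closed_def by blast
  then have "gcd a b > 0"
    using assms(3) by (auto intro: Nat.gr0I)
  have "(\<Sum>w\<in>{w\<in>S. w dvd a \<and> w dvd b}. psi S w) = 1 / real (gcd a b)"
    using sum_psi_divisors [OF assms(1-3) \<open>gcd a b \<in> S\<close>] by simp
  moreover have "real a * real b = real (gcd a b) * real (lcm a b)"
    by (metis of_nat_mult prod_gcd_lcm_nat)
  ultimately show ?thesis
    using \<open>gcd a b > 0\<close> by simp
qed

definition dvd_weight_mat :: "nat list \<Rightarrow> (nat \<Rightarrow> real) \<Rightarrow> real mat" where
  "dvd_weight_mat xs w = mat (length xs) (length xs)
     (\<lambda>(i, k). if xs ! k dvd xs ! i then real (xs ! i) * w (xs ! k) else 0)"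

lemma sorted_nth_not_dvd:
  fixes xs :: "nat list"
  assumes "sorted xs" "distinct xs" "0 \<notin> set xs" "i < k" "k < length xs"
  shows "\<not> xs ! k dvd xs ! i"
proof
  assume dvd: "xs ! k dvd xs ! i"
  have "xs ! i \<in> set xs"
    using assms(4,5) by simp
  with assms(3) have "xs ! i > 0"
    by (metis gr0I)
  with dvd have "xs ! k \<le> xs ! i"
    by (rule dvd_imp_le)
  moreover have "xs ! i \<le> xs ! k" "xs ! i \<noteq> xs ! k"
    using assms by (auto simp: sorted_nth_mono nth_eq_iff_index_eq)
  ultimately show False
    by simp
qed

lemma det_dvd_weight_mat_neq_0:
  assumes "sorted xs" "distinct xs" "0 \<notin> set xs" "\<And>x. x \<in> set xs \<Longrightarrow> w x \<noteq> 0"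
  shows "det (dvd_weight_mat xs w) \<noteq> 0"
proof -
  let ?A = "dvd_weight_mat xs w"
  have "?A \<in> carrier_mat (length xs) (length xs)"
    by (simp add: dvd_weight_mat_def)
  then have "det ?A = prod_list (diag_mat ?A)"
    by (rule det_lower_triangular [rotated]) (auto simp: dvd_weight_mat_def sorted_nth_not_dvd assms)
  moreover have "0 \<notin> set (diag_mat ?A)"
    using assms(3,4) by (auto simp: diag_mat_def dvd_weight_mat_def) (metis nth_mem)
  ultimately show ?thesis
    by simp
qed

lemma lcm_matrix_factorization:
  assumes "finite S" "gcd_closed S" "0 \<notin> S"
  defines "xs \<equiv> sorted_list_of_set S"
  shows "lcm_matrix S = dvd_weight_mat xs (psi S) * transpose_mat (dvd_weight_mat xs (\<lambda>_. 1))"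
    (is "_ = ?F * transpose_mat ?E")
proof (rule eq_matI)
  have xs: "set xs = S" "distinct xs"
    using assms(1) by (simp_all add: xs_def)
  let ?n = "length xs"
  show "dim_row (lcm_matrix S) = dim_row (?F * transpose_mat ?E)"
    "dim_col (lcm_matrix S) = dim_col (?F * transpose_mat ?E)"
    by (simp_all add: lcm_matrix_def Let_def xs_def dvd_weight_mat_def)
  fix i j
  assume "i < dim_row (?F * transpose_mat ?E)" "j < dim_col (?F * transpose_mat ?E)"
  then have i: "i < ?n" and j: "j < ?n"
    by (simp_all add: dvd_weight_mat_def)
  have "xs ! i \<in> S" "xs ! j \<in> S"
    using i j xs(1) by auto
  let ?c = "\<lambda>w. if w dvd xs ! i \<and> w dvd xs ! j then psi S w else 0"
  have "(?F * transpose_mat ?E) $$ (i, j) = (\<Sum>k<?n. ?F $$ (i, k) * ?E $$ (j, k))"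
    using i j by (simp add: dvd_weight_mat_def scalar_prod_def lessThan_atLeast0)
  also have "\<dots> = real (xs ! i) * real (xs ! j) * (\<Sum>k<?n. ?c (xs ! k))"
    unfolding sum_distrib_left using i j by (intro sum.cong) (auto simp: dvd_weight_mat_def)
  also have "(\<Sum>k<?n. ?c (xs ! k)) = (\<Sum>w\<in>S. ?c w)"
    using xs by (intro sum.reindex_bij_betw bij_betw_nth) simp_all
  also have "real (xs ! i) * real (xs ! j) * (\<Sum>w\<in>S. ?c w) = real (lcm (xs ! i) (xs ! j))"
    using lcm_eq_sum_psi [OF assms(1-3) \<open>xs ! i \<in> S\<close> \<open>xs ! j \<in> S\<close>] assms(1)
    by (simp add: sum.inter_filter)
  finally show "lcm_matrix S $$ (i, j) = (?F * transpose_mat ?E) $$ (i, j)"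
    using i j by (simp add: lcm_matrix_def Let_def xs_def)
qed

lemma invertible_mat_if_det_neq_0:
  fixes A :: "'a :: field mat"
  assumes "A \<in> carrier_mat n n" "det A \<noteq> 0"
  shows "invertible_mat A"
proof -
  have "A \<in> Units (ring_mat TYPE('a) n n)"
    by (rule det_non_zero_imp_unit [OF assms])
  then obtain B where "B \<in> carrier_mat n n" "B * A = 1\<^sub>m n" "A * B = 1\<^sub>m n"
    unfolding Units_def ring_mat_def by auto
  with assms(1) show ?thesis
    unfolding invertible_mat_def inverts_mat_def by auto
qed

lemma invertible_lcm_matrix:
  assumes "finite S" "gcd_closed S" "0 \<notin> S" "\<And>x. x \<in> S \<Longrightarrow> psi S x \<noteq> 0"
  shows "invertible_mat (lcm_matrix S)"
proof -
  define xs where "xs = sorted_list_of_set S"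
  have xs: "sorted xs" "distinct xs" "set xs = S"
    using assms(1) by (simp_all add: xs_def)
  with assms(3) have "0 \<notin> set xs"
    by simp
  let ?F = "dvd_weight_mat xs (psi S)" and ?E = "dvd_weight_mat xs (\<lambda>_. 1)"
  have F: "?F \<in> carrier_mat (length xs) (length xs)" and E: "?E \<in> carrier_mat (length xs) (length xs)"
    by (simp_all add: dvd_weight_mat_def)
  have "lcm_matrix S = ?F * transpose_mat ?E"
    unfolding xs_def by (rule lcm_matrix_factorization [OF assms(1-3)])
  moreover have "det (?F * transpose_mat ?E) = det ?F * det ?E"
    using F E by (simp add: det_mult det_transpose)
  moreover have "det ?F \<noteq> 0" "det ?E \<noteq> 0"
    using xs \<open>0 \<notin> set xs\<close> assms(4) by (intro det_dvd_weight_mat_neq_0; simp)+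
  ultimately show ?thesis
    using F E by (intro invertible_mat_if_det_neq_0 [of _ "length xs"]) auto
qed

section \<open>Antichains of divisors\<close>

definition dvd_antichain :: "nat set \<Rightarrow> bool" where
  "dvd_antichain Y \<longleftrightarrow> (\<forall>a\<in>Y. \<forall>b\<in>Y. a dvd b \<longrightarrow> a = b)"

definition down_set :: "nat set \<Rightarrow> nat set \<Rightarrow> nat set" where
  "down_set S Y = {s\<in>S. \<exists>y\<in>Y. s dvd y}"

text \<open>If the gcds of \<open>y\<close> with the other elements of \<open>Y\<close> have a greatest element \<open>c\<close>, then
  removing \<open>y\<close> from \<open>Y\<close> lowers \<open>avoid_sum x Y\<close> by exactly \<open>1/c - 1/y\<close>.\<close>
definition peelable :: "nat set \<Rightarrow> nat \<Rightarrow> bool" where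
  "peelable Y y \<longleftrightarrow> (\<exists>c\<in>gcd y ` (Y - {y}). \<forall>c'\<in>gcd y ` (Y - {y}). c' dvd c)"

definition cube_triple :: "nat \<Rightarrow> nat \<Rightarrow> nat \<Rightarrow> bool" where
  "cube_triple a b c \<longleftrightarrow>
     dvd_incomparable a b \<and> dvd_incomparable a c \<and> dvd_incomparable b c \<and>
     dvd_incomparable (gcd a b) (gcd a c) \<and> dvd_incomparable (gcd a b) (gcd b c) \<and>
     dvd_incomparable (gcd a c) (gcd b c)"

definition gcd_cube :: "nat \<Rightarrow> nat \<Rightarrow> nat \<Rightarrow> nat set" where
  "gcd_cube a b c = {a, b, c, gcd a b, gcd a c, gcd b c, gcd (gcd a b) c}"

lemma card_gcd_cube:
  assumes "cube_triple a b c"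
  shows "card (gcd_cube a b c) = 7"
proof -
  let ?L = "[a, b, c, gcd a b, gcd a c, gcd b c, gcd (gcd a b) c]"
  have "distinct ?L"
    using assms unfolding cube_triple_def dvd_incomparable_def
    by (auto simp: gcd.commute gcd.left_commute) (metis gcd_dvd1 gcd_dvd2 dvd_trans)+
  moreover have "gcd_cube a b c = set ?L"
    by (simp add: gcd_cube_def)
  ultimately show ?thesis
    by (simp only: distinct_card) simp
qed

lemma gcd_cube_subset_down_set:
  assumes "gcd_closed S" "{a, b, c} \<subseteq> S"
  shows "gcd_cube a b c \<subseteq> down_set S {a, b, c}"
  using assms unfolding gcd_cube_def down_set_def gcd_closed_def
  by (auto intro: dvd_trans)

lemma top_notin_gcd_cube:
  assumes "a dvd x" "b dvd x" "c dvd x" "x \<notin> {a, b, c}"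
  shows "x \<notin> gcd_cube a b c"
  using assms unfolding gcd_cube_def by (auto dest: dvd_antisym intro: dvd_trans)

lemma card_down_set_gcd_cube:
  assumes "finite S" "gcd_closed S" "{a, b, c} \<subseteq> S" "cube_triple a b c"
  shows "7 \<le> card (down_set S {a, b, c})"
proof -
  have "finite (down_set S {a, b, c})"
    using assms(1) by (simp add: down_set_def)
  then show ?thesis
    using card_mono [OF _ gcd_cube_subset_down_set [OF assms(2,3)]] card_gcd_cube [OF assms(4)]
    by simp
qed

lemma insert_gcd_cube_subset:
  assumes "gcd_closed S" "x \<in> S" "{a, b, c} \<subseteq> S"
  shows "insert x (gcd_cube a b c) \<subseteq> S"
  using gcd_cube_subset_down_set [OF assms(1,3)] assms(2) by (auto simp: down_set_def)

lemma card_insert_top_gcd_cube: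
  assumes "a dvd x" "b dvd x" "c dvd x" "x \<notin> {a, b, c}" "cube_triple a b c"
  shows "card (insert x (gcd_cube a b c)) = 8"
  using top_notin_gcd_cube [OF assms(1-4)] card_gcd_cube [OF assms(5)]
  by (simp add: gcd_cube_def)

lemma antichain_gcd_other:
  assumes "dvd_antichain Y" "y \<in> Y" "c \<in> gcd y ` (Y - {y})"
  shows "c dvd y" "c \<notin> Y"
proof -
  obtain z where z: "z \<in> Y" "z \<noteq> y" "c = gcd y z"
    using assms(3) by auto
  then show "c dvd y"
    by simp
  show "c \<notin> Y"
  proof
    assume "c \<in> Y"
    then have "c = y" "c = z"
      using assms(1,2) z unfolding dvd_antichain_def by simp_all
    with \<open>z \<noteq> y\<close> show False
      by simp
  qed
qed

lemma avoid_sum_Diff_less_if_peelable: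
  assumes "x > 0" "\<forall>z\<in>Y. z dvd x" "dvd_antichain Y" "y \<in> Y" "peelable Y y"
  shows "avoid_sum x (Y - {y}) < avoid_sum x Y"
proof -
  let ?G = "gcd y ` (Y - {y})"
  obtain c where c: "c \<in> ?G" "\<forall>c'\<in>?G. c' dvd c"
    using assms(5) unfolding peelable_def by blast
  have "y dvd x"
    using assms(2,4) by blast
  have "c dvd y" "c \<noteq> y"
    using antichain_gcd_other [OF assms(3,4) c(1)] assms(4) by auto
  moreover have "y > 0"
    using assms(1) \<open>y dvd x\<close> by (auto intro: Nat.gr0I)
  ultimately have "c > 0" "c < y"
    by (auto intro: Nat.gr0I dest: dvd_imp_le)
  have "avoid_sum x Y = avoid_sum x (Y - {y}) - avoid_sum y ?G"
    using avoid_sum_insert [OF assms(1) \<open>y dvd x\<close>, of "Y - {y}"] assms(4)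
    by (simp add: insert_absorb)
  also have "avoid_sum y ?G = avoid_sum y {c}"
    using c by (intro avoid_sum_cong) (blast intro: dvd_trans)
  also have "\<dots> = 1 / real y - 1 / real c"
    by (rule avoid_sum_singleton [OF \<open>y > 0\<close> \<open>c dvd y\<close>])
  finally show ?thesis
    using \<open>c > 0\<close> \<open>c < y\<close> by (simp add: frac_less2)
qed

lemma not_peelable_imp_incomparable_gcds:
  assumes "finite Y" "0 \<notin> Y" "y \<in> Y" "Y - {y} \<noteq> {}" "\<not> peelable Y y"
  obtains c1 c2 where "c1 \<in> gcd y ` (Y - {y})" "c2 \<in> gcd y ` (Y - {y})"
    "dvd_incomparable c1 c2"
proof -
  let ?G = "gcd y ` (Y - {y})"
  define c1 where "c1 = Max ?G"
  have "finite ?G" "?G \<noteq> {}"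
    using assms(1,4) by auto
  then have "c1 \<in> ?G"
    unfolding c1_def by (rule Max_in)
  then obtain c2 where c2: "c2 \<in> ?G" "\<not> c2 dvd c1"
    using assms(5) unfolding peelable_def by blast
  have "c2 > 0"
    using c2(1) assms(2,3) by (auto intro: Nat.gr0I)
  moreover have "c2 \<le> c1"
    using \<open>finite ?G\<close> c2(1) unfolding c1_def by simp
  ultimately have "\<not> c1 dvd c2"
    using c2(2) by (auto dest: dvd_imp_le)
  with c2 \<open>c1 \<in> ?G\<close> show ?thesis
    using that unfolding dvd_incomparable_def by blast
qed

lemma not_peelable_triple_imp_cube_triple:
  assumes "dvd_antichain {a, b, c}" "distinct [a, b, c]"
    "\<forall>y\<in>{a, b, c}. \<not> peelable {a, b, c} y"
  shows "cube_triple a b c"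
proof -
  have "gcd a ` ({a, b, c} - {a}) = {gcd a b, gcd a c}"
    "gcd b ` ({a, b, c} - {b}) = {gcd a b, gcd b c}"
    "gcd c ` ({a, b, c} - {c}) = {gcd a c, gcd b c}"
    using assms(2) by (auto simp: gcd.commute)
  moreover have "\<not> peelable {a, b, c} a" "\<not> peelable {a, b, c} b" "\<not> peelable {a, b, c} c"
    using assms(3) by simp_all
  ultimately have "dvd_incomparable (gcd a b) (gcd a c)" "dvd_incomparable (gcd a b) (gcd b c)"
    "dvd_incomparable (gcd a c) (gcd b c)"
    unfolding peelable_def dvd_incomparable_def by auto
  moreover have "dvd_incomparable a b" "dvd_incomparable a c" "dvd_incomparable b c"
    using assms(1,2) unfolding dvd_antichain_def dvd_incomparable_def by auto
  ultimately show ?thesis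
    by (simp add: cube_triple_def)
qed

lemma gcd_other_in_down_set:
  assumes "gcd_closed S" "Y \<subseteq> S" "dvd_antichain Y" "y \<in> Y" "c \<in> gcd y ` (Y - {y})"
  shows "c \<in> down_set S Y - Y"
  using antichain_gcd_other [OF assms(3-5)] assms unfolding down_set_def gcd_closed_def
  by auto

lemma not_peelable_incomparable_below:
  assumes "finite S" "gcd_closed S" "0 \<notin> S" "Y \<subseteq> S" "dvd_antichain Y" "y \<in> Y"
    "Y - {y} \<noteq> {}" "\<not> peelable Y y"
  obtains c1 c2 where "c1 \<in> down_set S Y - Y" "c2 \<in> down_set S Y - Y" "c1 dvd y" "c2 dvd y"
    "dvd_incomparable c1 c2"
proof -
  have "finite Y" "0 \<notin> Y"
    using assms(1,3,4) finite_subset by auto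
  then obtain c1 c2 where "c1 \<in> gcd y ` (Y - {y})" "c2 \<in> gcd y ` (Y - {y})"
    "dvd_incomparable c1 c2"
    using not_peelable_imp_incomparable_gcds [OF _ _ assms(6-8)] by blast
  with that show ?thesis
    using gcd_other_in_down_set [OF assms(2,4-6)] antichain_gcd_other [OF assms(5,6)] by blast
qed

lemma gcd_in_down_set_Diff:
  assumes "gcd_closed S" "dvd_antichain Y" "y \<in> Y" "c1 \<in> down_set S Y - Y" "c2 \<in> down_set S Y"
    "c1 dvd y"
  shows "gcd c1 c2 \<in> down_set S Y - Y"
proof -
  have "gcd c1 c2 \<in> S"
    using assms(1,4,5) unfolding gcd_closed_def down_set_def by blast
  moreover have "gcd c1 c2 dvd y"
    using assms(6) by (rule dvd_trans [OF gcd_dvd1])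
  moreover have "gcd c1 c2 \<notin> Y"
  proof
    assume "gcd c1 c2 \<in> Y"
    with \<open>gcd c1 c2 dvd y\<close> assms(2,3) have "gcd c1 c2 = y"
      unfolding dvd_antichain_def by blast
    then have "c1 = y"
      using assms(6) by (metis dvd_antisym gcd_dvd1)
    with assms(3,4) show False
      by simp
  qed
  ultimately show ?thesis
    using assms(3) unfolding down_set_def by blast
qed

lemma incomparable_pair_in_gcd_triple:
  assumes "dvd_incomparable d1 d2" "d1 \<in> {c1, c2, gcd c1 c2}" "d2 \<in> {c1, c2, gcd c1 c2}"
  shows "c1 \<in> {d1, d2}" "c2 \<in> {d1, d2}"
  using assms unfolding dvd_incomparable_def by auto

lemma eq_gcd_triple_if_card_le_3:
  assumes "finite D" "card D \<le> 3" "{c1, c2, gcd c1 c2} \<subseteq> D" "dvd_incomparable c1 c2"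
  shows "D = {c1, c2, gcd c1 c2}"
proof -
  have "c1 \<noteq> c2" "gcd c1 c2 \<noteq> c1" "gcd c1 c2 \<noteq> c2"
    using assms(4) unfolding dvd_incomparable_def by (metis dvd_refl gcd_dvd1 gcd_dvd2)+
  then have "card {c1, c2, gcd c1 c2} = 3"
    by simp
  then show ?thesis
    using assms(1-3) card_mono [OF assms(1,3)] by (intro card_subset_eq [symmetric]) auto
qed

text \<open>If at most three elements of \<open>S\<close> lay strictly below \<open>Y\<close>, every element of \<open>Y\<close> would be
  above the same incomparable pair \<open>c1, c2\<close>, and then so would the gcd of two elements of \<open>Y\<close>,
  which is itself one of \<open>c1\<close>, \<open>c2\<close>, \<open>gcd c1 c2\<close>.\<close>
lemma card_down_set_not_peelable:
  assumes "finite S" "gcd_closed S" "0 \<notin> S" "Y \<subseteq> S" "dvd_antichain Y" "4 \<le> card Y"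
    and not_peelable: "\<forall>y\<in>Y. \<not> peelable Y y"
  shows "8 \<le> card (down_set S Y)"
proof (rule ccontr)
  assume "\<not> 8 \<le> card (down_set S Y)"
  define D where "D = down_set S Y - Y"
  have "finite Y" "finite (down_set S Y)"
    using assms(1,4) finite_subset by (auto simp: down_set_def)
  moreover have "Y \<subseteq> down_set S Y"
    using assms(4) unfolding down_set_def by (blast intro: dvd_refl)
  ultimately have "card D \<le> 3" "finite D"
    using \<open>\<not> 8 \<le> card (down_set S Y)\<close> assms(6) by (simp_all add: D_def card_Diff_subset)
  have others: "Y - {y} \<noteq> {}" if "y \<in> Y" for y
  proof -
    have "card (Y - {y}) \<noteq> 0"
      using that assms(6) \<open>finite Y\<close> by simp
    then show ?thesis
      by force
  qed
  have pair: "\<exists>c1 c2. c1 \<in> D \<and> c2 \<in> D \<and> c1 dvd y \<and> c2 dvd y \<and> dvd_incomparable c1 c2"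
    if y: "y \<in> Y" for y
  proof -
    have "\<not> peelable Y y"
      using not_peelable y by blast
    then obtain c1 c2 where "c1 \<in> D" "c2 \<in> D" "c1 dvd y" "c2 dvd y" "dvd_incomparable c1 c2"
      using not_peelable_incomparable_below [OF assms(1-5) y others [OF y]] unfolding D_def by blast
    then show ?thesis
      by blast
  qed
  have "Y \<noteq> {}"
    using assms(6) by auto
  then obtain y where "y \<in> Y"
    by blast
  then obtain c1 c2 where c: "c1 \<in> D" "c2 \<in> D" "c1 dvd y" "dvd_incomparable c1 c2"
    using pair by blast
  then have "gcd c1 c2 \<in> D"
    using gcd_in_down_set_Diff [OF assms(2,5) \<open>y \<in> Y\<close>] unfolding D_def by blast
  with c have D: "D = {c1, c2, gcd c1 c2}"
    using \<open>finite D\<close> \<open>card D \<le> 3\<close> by (intro eq_gcd_triple_if_card_le_3) simp_all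
  have c12_dvd: "c1 dvd z \<and> c2 dvd z" if z: "z \<in> Y" for z
  proof -
    obtain d1 d2 where d: "d1 \<in> D" "d2 \<in> D" "d1 dvd z" "d2 dvd z" "dvd_incomparable d1 d2"
      using pair [OF z] by blast
    then have "c1 \<in> {d1, d2}" "c2 \<in> {d1, d2}"
      using incomparable_pair_in_gcd_triple [OF d(5)] unfolding D by simp_all
    with d(3,4) show ?thesis
      by blast
  qed
  obtain z where "z \<in> Y" "z \<noteq> y"
    using others [OF \<open>y \<in> Y\<close>] by blast
  then have "gcd y z \<in> D"
    using gcd_other_in_down_set [OF assms(2,4,5) \<open>y \<in> Y\<close>, of "gcd y z"] by (simp add: D_def)
  then have "gcd y z dvd c1 \<or> gcd y z dvd c2"
    unfolding D by auto
  moreover have "c1 dvd gcd y z" "c2 dvd gcd y z"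
    using c12_dvd [OF \<open>y \<in> Y\<close>] c12_dvd [OF \<open>z \<in> Y\<close>] by simp_all
  ultimately show False
    using c(4) unfolding dvd_incomparable_def by (metis dvd_trans)
qed

lemma card_down_set_Diff_less:
  assumes "finite S" "Y \<subseteq> S" "dvd_antichain Y" "y \<in> Y"
  shows "card (down_set S (Y - {y})) < card (down_set S Y)"
proof (rule psubset_card_mono)
  show "finite (down_set S Y)"
    using assms(1) by (simp add: down_set_def)
  have "y \<in> down_set S Y"
    using assms(2,4) unfolding down_set_def by (blast intro: dvd_refl)
  moreover have "y \<notin> down_set S (Y - {y})"
    using assms(3,4) unfolding down_set_def dvd_antichain_def by blast
  ultimately show "down_set S (Y - {y}) \<subset> down_set S Y"
    unfolding down_set_def by blast
qed

lemma avoid_sum_pos_or_cube_triple: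
  assumes "finite S" "gcd_closed S" "0 \<notin> S" "x > 0"
  shows "Y \<subseteq> S \<Longrightarrow> dvd_antichain Y \<Longrightarrow> \<forall>y\<in>Y. y dvd x \<Longrightarrow> 2 \<le> card Y \<Longrightarrow>
    card (down_set S Y) \<le> 7 \<Longrightarrow>
    avoid_sum x Y > 0 \<or> (\<exists>a b c. Y = {a, b, c} \<and> cube_triple a b c)"
proof (induction "card Y" arbitrary: Y rule: less_induct)
  case less
  have "finite Y"
    using assms(1) less.prems(1) finite_subset by blast
  consider "card Y = 2" | y where "3 \<le> card Y" "y \<in> Y" "peelable Y y"
    | "card Y = 3" "\<forall>y\<in>Y. \<not> peelable Y y" | "4 \<le> card Y" "\<forall>y\<in>Y. \<not> peelable Y y"
    using less.prems(4) by force
  then show ?case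
  proof cases
    case 1
    then obtain a b where "Y = {a, b}" "a \<noteq> b"
      by (meson card_2_iff)
    with less.prems(2,3) show ?thesis
      using avoid_sum_pair_pos [OF assms(4)] unfolding dvd_antichain_def dvd_incomparable_def
      by auto
  next
    case (2 y)
    have "card (down_set S (Y - {y})) < card (down_set S Y)"
      using card_down_set_Diff_less [OF assms(1) less.prems(1,2) \<open>y \<in> Y\<close>] .
    with less.prems(5) have small: "card (down_set S (Y - {y})) < 7"
      by simp
    have "card (Y - {y}) = card Y - 1"
      using \<open>y \<in> Y\<close> \<open>finite Y\<close> by simp
    with 2 less.prems have "avoid_sum x (Y - {y}) > 0 \<or>
        (\<exists>a b c. Y - {y} = {a, b, c} \<and> cube_triple a b c)"
      using small by (intro less.hyps) (auto simp: dvd_antichain_def)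
    moreover have "\<not> (\<exists>a b c. Y - {y} = {a, b, c} \<and> cube_triple a b c)"
      using small card_down_set_gcd_cube [OF assms(1,2)] less.prems(1) by fastforce
    ultimately show ?thesis
      using avoid_sum_Diff_less_if_peelable [OF assms(4) less.prems(3,2) 2(2,3)] by simp
  next
    case 3
    then obtain a b c where "Y = {a, b, c}" "distinct [a, b, c]"
      by (auto simp: card_3_iff)
    with 3 less.prems(2) show ?thesis
      using not_peelable_triple_imp_cube_triple by blast
  next
    case 4
    with less.prems show ?thesis
      using card_down_set_not_peelable [OF assms(1-3)] by fastforce
  qed
qed

section \<open>Vanishing weights and the cube\<close>

lemma exists_maximal_multiple:
  fixes P :: "nat set"
  assumes "finite P" "0 \<notin> P" "p \<in> P"
  shows "\<exists>y\<in>P. p dvd y \<and> (\<forall>z\<in>P. y dvd z \<longrightarrow> y = z)"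
proof -
  let ?Q = "{z\<in>P. p dvd z}"
  define m where "m = Max ?Q"
  have "finite ?Q" "p \<in> ?Q"
    using assms by auto
  then have "m \<in> ?Q"
    unfolding m_def by (intro Max_in) auto
  moreover have "m = z" if "z \<in> P" "m dvd z" for z
  proof (rule antisym)
    show "m \<le> z"
      using that assms(2) by (auto intro: dvd_imp_le Nat.gr0I)
    show "z \<le> m"
      using that \<open>m \<in> ?Q\<close> \<open>finite ?Q\<close> unfolding m_def by (auto intro: Max_ge dvd_trans)
  qed
  ultimately show ?thesis
    by blast
qed

lemma avoid_sum_neq_0_if_card_le_1:
  assumes "x > 0" "finite Y" "card Y \<le> 1" "\<forall>y\<in>Y. y dvd x \<and> y \<noteq> x"
  shows "avoid_sum x Y \<noteq> 0"
proof (cases "Y = {}")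
  case True
  then show ?thesis
    using avoid_sum_empty [OF assms(1)] assms(1) by simp
next
  case False
  with assms(2,3) obtain y where "Y = {y}"
    by (metis card_0_eq card_1_singletonE le_Suc_eq One_nat_def le_zero_eq)
  with assms(1,4) have "y dvd x" "y < x"
    by (auto intro: dvd_imp_le le_neq_implies_less)
  moreover have "y > 0"
    using \<open>y dvd x\<close> assms(1) by (auto intro: Nat.gr0I)
  ultimately show ?thesis
    using \<open>Y = {y}\<close> avoid_sum_singleton [OF assms(1)] by (simp add: frac_less2)
qed

definition maximal_proper_divisors :: "nat set \<Rightarrow> nat \<Rightarrow> nat set" where
  "maximal_proper_divisors S x =
     {y\<in>proper_divisors_in S x. \<forall>z\<in>proper_divisors_in S x. y dvd z \<longrightarrow> y = z}"

lemma maximal_proper_divisors_cofinal: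
  assumes "finite S" "0 \<notin> S" "p \<in> proper_divisors_in S x"
  shows "\<exists>y\<in>maximal_proper_divisors S x. p dvd y"
  using exists_maximal_multiple [of "proper_divisors_in S x" p] assms
  by (auto simp: maximal_proper_divisors_def proper_divisors_in_def)

lemma psi_eq_avoid_sum_maximal_proper_divisors:
  assumes "finite S" "0 \<notin> S"
  shows "psi S x = avoid_sum x (maximal_proper_divisors S x)"
  unfolding psi_def using maximal_proper_divisors_cofinal [OF assms]
  by (intro avoid_sum_cofinal) (auto simp: maximal_proper_divisors_def)

lemma down_set_maximal_proper_divisors:
  assumes "finite S" "0 \<notin> S"
  shows "down_set S (maximal_proper_divisors S x) = proper_divisors_in S x"
proof
  show "down_set S (maximal_proper_divisors S x) \<subseteq> proper_divisors_in S x"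
    unfolding down_set_def maximal_proper_divisors_def proper_divisors_in_def
    by (auto intro: dvd_trans dest: dvd_antisym)
  show "proper_divisors_in S x \<subseteq> down_set S (maximal_proper_divisors S x)"
    using maximal_proper_divisors_cofinal [OF assms]
    by (auto simp: down_set_def proper_divisors_in_def)
qed

lemma psi_eq_0_imp_cube_triple_below:
  assumes "finite S" "gcd_closed S" "0 \<notin> S" "card S \<le> 8" "x \<in> S" "psi S x = 0"
  obtains a b c where "{a, b, c} \<subseteq> S" "a dvd x" "b dvd x" "c dvd x" "x \<notin> {a, b, c}"
    "cube_triple a b c"
proof -
  let ?Y = "maximal_proper_divisors S x"
  have "x > 0"
    using assms(3,5) by (auto intro: Nat.gr0I)
  have Y: "?Y \<subseteq> S" "finite ?Y" "dvd_antichain ?Y" "\<forall>y\<in>?Y. y dvd x \<and> y \<noteq> x"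
    using assms(1) finite_subset
    by (auto simp: maximal_proper_divisors_def proper_divisors_in_def dvd_antichain_def)
  have "avoid_sum x ?Y = 0"
    using assms(6) psi_eq_avoid_sum_maximal_proper_divisors [OF assms(1,3)] by simp
  then have "2 \<le> card ?Y"
    using avoid_sum_neq_0_if_card_le_1 [OF \<open>x > 0\<close> Y(2) _ Y(4)] by linarith
  moreover have "card (proper_divisors_in S x) \<le> card (S - {x})"
    using assms(1) by (intro card_mono) (auto simp: proper_divisors_in_def)
  then have "card (down_set S ?Y) \<le> 7"
    using assms(1,4,5) by (simp add: down_set_maximal_proper_divisors [OF assms(1,3)])
  ultimately obtain a b c where "?Y = {a, b, c}" "cube_triple a b c"
    using avoid_sum_pos_or_cube_triple [OF assms(1-3) \<open>x > 0\<close> Y(1,3)] Y(4)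
      \<open>avoid_sum x ?Y = 0\<close> by auto
  with Y(1,4) show ?thesis
    using that by auto
qed

lemma Gcd_insert_image_dvd_iff:
  fixes x :: nat and y :: "'i \<Rightarrow> nat"
  defines "h \<equiv> \<lambda>T. Gcd (insert x (y ` T))"
  assumes "inj_on h (Pow I)" "T \<subseteq> I" "U \<subseteq> I"
  shows "h T dvd h U \<longleftrightarrow> U \<subseteq> T"
proof
  show "h T dvd h U" if "U \<subseteq> T"
    unfolding h_def using that by (intro Gcd_greatest Gcd_dvd) auto
next
  assume "h T dvd h U"
  show "U \<subseteq> T"
  proof
    fix i
    assume "i \<in> U"
    then have "h U dvd y i"
      unfolding h_def by (intro Gcd_dvd) blast
    with \<open>h T dvd h U\<close> have "h T dvd y i"
      by (rule dvd_trans)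
    have "h (insert i T) = gcd (y i) (h T)"
      unfolding h_def by (simp add: gcd.left_commute)
    also have "\<dots> = h T"
      using \<open>h T dvd y i\<close> by simp
    finally have "insert i T = T"
      using assms(2-4) \<open>i \<in> U\<close> by (auto dest: inj_onD)
    then show "i \<in> T"
      by blast
  qed
qed

lemma dvd_iso_Pow_if_antitone_bij:
  assumes "bij_betw h (Pow I) S" "\<And>T U. T \<subseteq> I \<Longrightarrow> U \<subseteq> I \<Longrightarrow> h T dvd h U \<longleftrightarrow> U \<subseteq> T"
  shows "\<exists>f. bij_betw f S (Pow I) \<and> (\<forall>u\<in>S. \<forall>v\<in>S. u dvd v \<longleftrightarrow> f u \<subseteq> f v)"
proof -
  define g where "g = the_inv_into (Pow I) h"
  have g: "bij_betw g S (Pow I)"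
    unfolding g_def by (rule bij_betw_the_inv_into [OF assms(1)])
  have h_g: "h (g u) = u" if "u \<in> S" for u
    using assms(1) that unfolding g_def bij_betw_def by (simp add: f_the_inv_into_f)
  have "bij_betw (\<lambda>T. I - T) (Pow I) (Pow I)"
    by (rule bij_betw_byWitness [where f' = "\<lambda>T. I - T"]) auto
  with g have "bij_betw ((\<lambda>T. I - T) \<circ> g) S (Pow I)"
    by (rule bij_betw_trans)
  moreover have "u dvd v \<longleftrightarrow> I - g u \<subseteq> I - g v" if "u \<in> S" "v \<in> S" for u v
  proof -
    have "g u \<subseteq> I" "g v \<subseteq> I"
      using g that by (auto dest: bij_betwE)
    then have "u dvd v \<longleftrightarrow> g v \<subseteq> g u"
      using assms(2) [of "g u" "g v"] h_g that by simp
    also have "\<dots> \<longleftrightarrow> I - g u \<subseteq> I - g v"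
      using \<open>g u \<subseteq> I\<close> \<open>g v \<subseteq> I\<close> by blast
    finally show ?thesis .
  qed
  ultimately show ?thesis
    by (intro exI [of _ "(\<lambda>T. I - T) \<circ> g"]) auto
qed

lemma gcd_cube_iso_Pow:
  assumes "finite S" "gcd_closed S" "card S = 8" "x \<in> S" "{a, b, c} \<subseteq> S"
    "a dvd x" "b dvd x" "c dvd x" "x \<notin> {a, b, c}" "cube_triple a b c"
  shows "\<exists>f. bij_betw f S (Pow {0::nat, 1, 2}) \<and> (\<forall>u\<in>S. \<forall>v\<in>S. u dvd v \<longleftrightarrow> f u \<subseteq> f v)"
proof -
  define h where "h = (\<lambda>T. Gcd (insert x ((!) [a, b, c] ` T)))"
  let ?P = "Pow {0::nat, 1, 2}"
  have "gcd x a = a" "gcd x b = b" "gcd x c = c" "gcd x (gcd a b) = gcd a b"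
    "gcd x (gcd a c) = gcd a c" "gcd x (gcd b c) = gcd b c"
    "gcd x (gcd a (gcd b c)) = gcd (gcd a b) c"
    using assms(6-8) by (simp_all add: gcd.assoc dvd_trans [OF gcd_dvd1] dvd_trans [OF gcd_dvd2])
  moreover have "?P = {{}, {0}, {1}, {2}, {0, 1}, {0, 2}, {1, 2}, {0, 1, 2}}"
    by (simp add: Pow_insert insert_commute)
  ultimately have "h ` ?P = insert x (gcd_cube a b c)"
    by (simp add: h_def gcd_cube_def ac_simps)
  moreover have "insert x (gcd_cube a b c) \<subseteq> S"
    by (rule insert_gcd_cube_subset [OF assms(2,4,5)])
  moreover have "card (insert x (gcd_cube a b c)) = 8"
    by (rule card_insert_top_gcd_cube [OF assms(6-10)])
  ultimately have "h ` ?P = S" "card (h ` ?P) = card ?P"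
    using assms(1,3) by (simp_all add: card_subset_eq card_Pow)
  then have "bij_betw h ?P S"
    by (simp add: bij_betw_def eq_card_imp_inj_on)
  moreover have "\<And>T U. T \<subseteq> {0, 1, 2} \<Longrightarrow> U \<subseteq> {0, 1, 2} \<Longrightarrow> h T dvd h U \<longleftrightarrow> U \<subseteq> T"
    using Gcd_insert_image_dvd_iff [of x "(!) [a, b, c]"] \<open>bij_betw h ?P S\<close>
    unfolding h_def bij_betw_def by blast
  ultimately show ?thesis
    by (rule dvd_iso_Pow_if_antitone_bij)
qed

lemma psi_neq_0_if_card_le_7:
  assumes "finite S" "gcd_closed S" "0 \<notin> S" "card S \<le> 7" "x \<in> S"
  shows "psi S x \<noteq> 0"
proof
  assume "psi S x = 0"
  with assms obtain a b c where cube: "{a, b, c} \<subseteq> S" "a dvd x" "b dvd x" "c dvd x"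
    "x \<notin> {a, b, c}" "cube_triple a b c"
    by (elim psi_eq_0_imp_cube_triple_below) auto
  have "card (insert x (gcd_cube a b c)) \<le> card S"
    using insert_gcd_cube_subset [OF assms(2,5) cube(1)] assms(1) by (rule card_mono [rotated])
  with card_insert_top_gcd_cube [OF cube(2-6)] assms(4) show False
    by simp
qed

theorem theorem4p4:
  shows "(\<forall>S. finite S \<and> (\<forall>x\<in>S. x > 0) \<and> gcd_closed S \<and> card S \<le> 7
            \<longrightarrow> invertible_mat (lcm_matrix S))
       \<and> (\<forall>S. finite S \<and> (\<forall>x\<in>S. x > 0) \<and> gcd_closed S \<and> card S = 8
            \<and> \<not> invertible_mat (lcm_matrix S)
            \<longrightarrow> (\<exists>f. bij_betw f S (Pow {0::nat, 1, 2}) \<and>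
                    (\<forall>x\<in>S. \<forall>y\<in>S. x dvd y \<longleftrightarrow> f x \<subseteq> f y)))"
proof (intro conjI allI impI)
  fix S :: "nat set"
  assume "finite S \<and> (\<forall>x\<in>S. x > 0) \<and> gcd_closed S \<and> card S \<le> 7"
  then have S: "finite S" "gcd_closed S" "0 \<notin> S" and "card S \<le> 7"
    by auto
  show "invertible_mat (lcm_matrix S)"
    using psi_neq_0_if_card_le_7 [OF S \<open>card S \<le> 7\<close>] by (rule invertible_lcm_matrix [OF S])
next
  fix S :: "nat set"
  assume "finite S \<and> (\<forall>x\<in>S. x > 0) \<and> gcd_closed S \<and> card S = 8 \<and> \<not> invertible_mat (lcm_matrix S)"
  then have S: "finite S" "gcd_closed S" "0 \<notin> S" and "card S = 8" "\<not> invertible_mat (lcm_matrix S)"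
    by auto
  then obtain x where "x \<in> S" "psi S x = 0"
    using invertible_lcm_matrix [OF S] by blast
  with S \<open>card S = 8\<close> obtain a b c where "{a, b, c} \<subseteq> S" "a dvd x" "b dvd x"
    "c dvd x" "x \<notin> {a, b, c}" "cube_triple a b c"
    by (elim psi_eq_0_imp_cube_triple_below) auto
  then show "\<exists>f. bij_betw f S (Pow {0::nat, 1, 2}) \<and> (\<forall>x\<in>S. \<forall>y\<in>S. x dvd y \<longleftrightarrow> f x \<subseteq> f y)"
    using gcd_cube_iso_Pow [OF S(1,2) \<open>card S = 8\<close> \<open>x \<in> S\<close>] by blast
qed

end
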